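(* Let $A$ be a 2-sided residuated $\vee$-semilattice and let $F$ be a filter of $A$. Then $F$ equals the intersection of all $\vee$-prime filters of $A$ that contain $F$.
   Context: A residuated poset is a partially ordered semigroup $(A;\cdot,\le)$ with binary operations $\to,\leadsto$ such that $x\cdot y\le z$ iff $x\le y\to z$ iff $y\le x\leadsto z$. It is 2-sided if $x\cdot y\le x$ and $x\cdot y\le y$ for all $x,y$, and a residuated $\vee$-semilattice if $(A,\le)$ is a join-semilattice. A filter is a nonempty upward closed subset closed under $\cdot$. A filter $G$ is $\vee$-prime if $x\vee y\in G$ implies $x\in G$ or $y\in G$. The intersection of the empty family is $A$. *)

theory Defs
  imports Main
begin

definition residuated_poset ::
  "('a::order \<Rightarrow> 'a \<Rightarrow> 'a) \<Rightarrow> ('a \<Rightarrow> 'a \<Rightarrow> 'a) \<Rightarrow> ('a \<Rightarrow> 'a \<Rightarrow> 'a) \<Rightarrow> bool" where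
  "residuated_poset m r l \<longleftrightarrow>
     (\<forall>x y z. m (m x y) z = m x (m y z)) \<and>
     (\<forall>x y z. x \<le> y \<longrightarrow> m x z \<le> m y z \<and> m z x \<le> m z y) \<and>
     (\<forall>x y z. (m x y \<le> z \<longleftrightarrow> x \<le> r y z) \<and> (m x y \<le> z \<longleftrightarrow> y \<le> l x z))"

definition two_sided :: "('a::order \<Rightarrow> 'a \<Rightarrow> 'a) \<Rightarrow> bool" where
  "two_sided m \<longleftrightarrow> (\<forall>x y. m x y \<le> x \<and> m x y \<le> y)"

definition residuated_sup_semilattice ::
  "('a::semilattice_sup \<Rightarrow> 'a \<Rightarrow> 'a) \<Rightarrow> ('a \<Rightarrow> 'a \<Rightarrow> 'a) \<Rightarrow> ('a \<Rightarrow> 'a \<Rightarrow> 'a) \<Rightarrow> bool" where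
  "residuated_sup_semilattice m r l \<longleftrightarrow> residuated_poset m r l"

definition res_filter :: "('a::order \<Rightarrow> 'a \<Rightarrow> 'a) \<Rightarrow> 'a set \<Rightarrow> bool" where
  "res_filter m F \<longleftrightarrow> F \<noteq> {} \<and> (\<forall>x y. x \<in> F \<and> x \<le> y \<longrightarrow> y \<in> F) \<and>
     (\<forall>x y. x \<in> F \<and> y \<in> F \<longrightarrow> m x y \<in> F)"

definition sup_prime :: "('a::semilattice_sup) set \<Rightarrow> bool" where
  "sup_prime G \<longleftrightarrow> (\<forall>x y. sup x y \<in> G \<longrightarrow> x \<in> G \<or> y \<in> G)"

end

theory Submission
  imports Defs
begin

text \<open>
  If \<open>a \<notin> F\<close>, Zorn's lemma yields a filter \<open>G \<supseteq> F\<close> that is maximal among the filters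
  avoiding \<open>a\<close>; it suffices to show that \<open>G\<close> is \<open>\<or>\<close>-prime. In a 2-sided residuated
  poset the filter generated by \<open>G\<close> and \<open>x\<close> consists of the upper bounds of the powers
  \<open>(g x)^n\<close> with \<open>g \<in> G\<close>. Residuation makes multiplication distribute over joins, and
  two-sidedness then gives \<open>(p \<or> q)^(i+j) \<le> p^i \<or> q^j\<close>. So if \<open>x, y \<notin> G\<close>, maximality
  puts \<open>a\<close> above a power of \<open>h x\<close> and of \<open>h y\<close> for a common \<open>h \<in> G\<close>, hence above a power
  of \<open>h (x \<or> y)\<close>, which lies in \<open>G\<close> as soon as \<open>x \<or> y\<close> does.
\<close>

lemma res_filter_Union_chain:
  assumes "C \<noteq> {}" and "\<And>G. G \<in> C \<Longrightarrow> res_filter m G" and "subset.chain UNIV C"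
  shows "res_filter m (\<Union>C)"
  unfolding res_filter_def
proof (intro conjI allI impI)
  show "\<Union>C \<noteq> {}" using assms(1,2) unfolding res_filter_def by blast
next
  fix x y assume "x \<in> \<Union>C \<and> x \<le> y"
  then show "y \<in> \<Union>C" using assms(2) unfolding res_filter_def by blast
next
  fix x y assume "x \<in> \<Union>C \<and> y \<in> \<Union>C"
  then obtain X Y where XY: "X \<in> C" "Y \<in> C" "x \<in> X" "y \<in> Y" by blast
  with assms(3) have "X \<subseteq> Y \<or> Y \<subseteq> X" unfolding subset.chain_def by blast
  then show "m x y \<in> \<Union>C" using XY assms(2) unfolding res_filter_def by blast
qed

lemma res_filter_maximal_avoiding:
  assumes "res_filter m F" and "a \<notin> F"
  obtains G where "res_filter m G" "F \<subseteq> G" "a \<notin> G"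
    "\<And>H. res_filter m H \<Longrightarrow> G \<subseteq> H \<Longrightarrow> a \<notin> H \<Longrightarrow> H = G"
proof -
  let ?S = "{G. res_filter m G \<and> F \<subseteq> G \<and> a \<notin> G}"
  have "\<exists>G\<in>?S. \<forall>H\<in>?S. G \<subseteq> H \<longrightarrow> H = G"
  proof (rule subset_Zorn_nonempty)
    show "?S \<noteq> {}" using assms by blast
  next
    fix C assume C: "C \<noteq> {}" "subset.chain ?S C"
    then have CS: "C \<subseteq> ?S" and "subset.chain UNIV C"
      unfolding subset.chain_def by auto
    with C(1) have "res_filter m (\<Union>C)"
      by (intro res_filter_Union_chain) auto
    moreover have "F \<subseteq> \<Union>C" "a \<notin> \<Union>C" using C(1) CS by blast+
    ultimately show "\<Union>C \<in> ?S" by blast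
  qed
  then obtain G where "G \<in> ?S" and "\<forall>H\<in>?S. G \<subseteq> H \<longrightarrow> H = G" by blast
  then show thesis by (intro that) auto
qed

locale residuated_sup =
  fixes m r l :: "'a::semilattice_sup \<Rightarrow> 'a \<Rightarrow> 'a"
  assumes residuated: "residuated_poset m r l"
begin

lemma m_assoc: "m (m x y) z = m x (m y z)"
  using residuated unfolding residuated_poset_def by blast

lemma m_mono_left: "x \<le> y \<Longrightarrow> m x z \<le> m y z"
  using residuated unfolding residuated_poset_def by blast

lemma m_mono_right: "x \<le> y \<Longrightarrow> m z x \<le> m z y"
  using residuated unfolding residuated_poset_def by blast

lemma m_mono: "x \<le> x' \<Longrightarrow> y \<le> y' \<Longrightarrow> m x y \<le> m x' y'"
  by (meson m_mono_left m_mono_right order_trans)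

lemma residual_right_iff: "m x y \<le> z \<longleftrightarrow> x \<le> r y z"
  using residuated unfolding residuated_poset_def by blast

lemma residual_left_iff: "m x y \<le> z \<longleftrightarrow> y \<le> l x z"
  using residuated unfolding residuated_poset_def by blast

lemma m_sup_distrib_right: "m (sup x y) z = sup (m x z) (m y z)"
proof (rule order.antisym)
  have "x \<le> r z (sup (m x z) (m y z))" "y \<le> r z (sup (m x z) (m y z))"
    by (simp_all flip: residual_right_iff)
  then show "m (sup x y) z \<le> sup (m x z) (m y z)"
    by (simp add: residual_right_iff)
qed (simp add: m_mono_left)

lemma m_sup_distrib_left: "m z (sup x y) = sup (m z x) (m z y)"
proof (rule order.antisym)
  have "x \<le> l z (sup (m z x) (m z y))" "y \<le> l z (sup (m z x) (m z y))"
    by (simp_all flip: residual_left_iff)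
  then show "m z (sup x y) \<le> sup (m z x) (m z y)"
    by (simp add: residual_left_iff)
qed (simp add: m_mono_right)

text \<open>There is no unit, so the exponent is shifted: \<open>mpow x n\<close> is the product of \<open>n + 1\<close> copies of \<open>x\<close>.\<close>

fun mpow :: "'a \<Rightarrow> nat \<Rightarrow> 'a" where
  "mpow x 0 = x"
| "mpow x (Suc n) = m x (mpow x n)"

lemma mpow_mono: "x \<le> y \<Longrightarrow> mpow x n \<le> mpow y n"
  by (induction n) (simp_all add: m_mono)

lemma mpow_add: "mpow x (i + j + 1) = m (mpow x i) (mpow x j)"
  by (induction i) (simp_all add: m_assoc)

lemma mpow_in_res_filter: "res_filter m G \<Longrightarrow> x \<in> G \<Longrightarrow> mpow x n \<in> G"
  by (induction n) (auto simp: res_filter_def)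

end

locale two_sided_residuated_sup = residuated_sup +
  assumes two_sided: "two_sided m"
begin

lemma m_le_left: "m x y \<le> x" and m_le_right: "m x y \<le> y"
  using two_sided unfolding two_sided_def by auto

lemma mpow_antimono: "n \<le> k \<Longrightarrow> mpow x k \<le> mpow x n"
proof (induction k rule: dec_induct)
  case (step k)
  then show ?case using m_le_right[of x "mpow x k"] by simp
qed simp

lemma mpow_sup_le: "mpow (sup p q) (i + j + 1) \<le> sup (mpow p i) (mpow q j)"
proof (induction "i + j" arbitrary: i j)
  case 0
  then show ?case using m_le_left[of "sup p q" "sup p q"] by simp
next
  case (Suc n)
  let ?s = "mpow (sup p q) (Suc n)"
  have p_part: "m p ?s \<le> sup (mpow p i) (mpow q j)"
  proof (cases "i = 0")
    case True
    then show ?thesis using m_le_left[of p ?s] by (simp add: le_supI1)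
  next
    case False
    then obtain i' where i: "i = Suc i'" using not0_implies_Suc by blast
    with Suc.hyps have "?s \<le> sup (mpow p i') (mpow q j)" by simp
    then have "m p ?s \<le> m p (sup (mpow p i') (mpow q j))" by (rule m_mono_right)
    also have "\<dots> = sup (mpow p i) (m p (mpow q j))" by (simp add: i m_sup_distrib_left)
    also have "\<dots> \<le> sup (mpow p i) (mpow q j)"
      using m_le_right[of p "mpow q j"] by (simp add: le_supI2)
    finally show ?thesis .
  qed
  have q_part: "m q ?s \<le> sup (mpow p i) (mpow q j)"
  proof (cases "j = 0")
    case True
    then show ?thesis using m_le_left[of q ?s] by (simp add: le_supI2)
  next
    case False
    then obtain j' where j: "j = Suc j'" using not0_implies_Suc by blast
    with Suc.hyps have "?s \<le> sup (mpow p i) (mpow q j')" by simp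
    then have "m q ?s \<le> m q (sup (mpow p i) (mpow q j'))" by (rule m_mono_right)
    also have "\<dots> = sup (m q (mpow p i)) (mpow q j)" by (simp add: j m_sup_distrib_left)
    also have "\<dots> \<le> sup (mpow p i) (mpow q j)"
      using m_le_right[of q "mpow p i"] by (simp add: le_supI1)
    finally show ?thesis .
  qed
  have "mpow (sup p q) (i + j + 1) = sup (m p ?s) (m q ?s)"
    using Suc.hyps(2)[symmetric] by (simp add: m_sup_distrib_right)
  with p_part q_part show ?case by simp
qed

definition filter_ext :: "'a set \<Rightarrow> 'a \<Rightarrow> 'a set" where
  "filter_ext G x = {z. \<exists>g\<in>G. \<exists>n. mpow (m g x) n \<le> z}"

lemma filter_ext_common_witness:
  assumes "res_filter m G" and "z \<in> filter_ext G x" and "w \<in> filter_ext G y"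
  obtains h n where "h \<in> G" "mpow (m h x) n \<le> z" "mpow (m h y) n \<le> w"
proof -
  obtain g i g' j where g: "g \<in> G" "mpow (m g x) i \<le> z"
    and g': "g' \<in> G" "mpow (m g' y) j \<le> w"
    using assms(2,3) unfolding filter_ext_def by blast
  let ?h = "m g g'" and ?n = "i + j"
  have "mpow (m ?h x) ?n \<le> mpow (m g x) i"
    using mpow_mono[OF m_mono_left[OF m_le_left]] mpow_antimono[of i ?n]
    by (meson le_add1 order_trans)
  moreover have "mpow (m ?h y) ?n \<le> mpow (m g' y) j"
    using mpow_mono[OF m_mono_left[OF m_le_right]] mpow_antimono[of j ?n]
    by (meson le_add2 order_trans)
  moreover have "?h \<in> G" using assms(1) g g' unfolding res_filter_def by blast
  ultimately show thesis using that g g' order_trans by blast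
qed

lemma res_filter_filter_ext:
  assumes G: "res_filter m G"
  shows "res_filter m (filter_ext G x)" "G \<subseteq> filter_ext G x" "x \<in> filter_ext G x"
proof -
  show "G \<subseteq> filter_ext G x"
  proof
    fix g assume "g \<in> G"
    moreover have "mpow (m g x) 0 \<le> g" by (simp add: m_le_left)
    ultimately show "g \<in> filter_ext G x" unfolding filter_ext_def by blast
  qed
  obtain g where "g \<in> G" using G unfolding res_filter_def by blast
  moreover have "mpow (m g x) 0 \<le> x" by (simp add: m_le_right)
  ultimately show x_in: "x \<in> filter_ext G x" unfolding filter_ext_def by blast
  have upward: "w \<in> filter_ext G x" if "z \<in> filter_ext G x" "z \<le> w" for z w
    using that unfolding filter_ext_def by (blast intro: order_trans)
  have mult: "m z w \<in> filter_ext G x"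
    if z: "z \<in> filter_ext G x" and w: "w \<in> filter_ext G x" for z w
  proof -
    obtain h n where "h \<in> G" "mpow (m h x) n \<le> z" "mpow (m h x) n \<le> w"
      using filter_ext_common_witness[OF G z w] .
    moreover from this have "mpow (m h x) (n + n + 1) \<le> m z w"
      by (simp only: mpow_add m_mono)
    ultimately show ?thesis unfolding filter_ext_def by blast
  qed
  show "res_filter m (filter_ext G x)"
    unfolding res_filter_def using x_in upward mult by blast
qed

lemma filter_ext_eq_self:
  assumes "res_filter m G" and "x \<in> G"
  shows "filter_ext G x = G"
proof
  show "filter_ext G x \<subseteq> G"
  proof
    fix z assume "z \<in> filter_ext G x"
    then obtain g n where "g \<in> G" "mpow (m g x) n \<le> z" unfolding filter_ext_def by blast
    with assms have "mpow (m g x) n \<in> G"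
      by (intro mpow_in_res_filter) (auto simp: res_filter_def)
    with assms(1) \<open>mpow (m g x) n \<le> z\<close> show "z \<in> G" unfolding res_filter_def by blast
  qed
qed (use assms res_filter_filter_ext in blast)

lemma filter_ext_Int_subset:
  assumes "res_filter m G"
  shows "filter_ext G x \<inter> filter_ext G y \<subseteq> filter_ext G (sup x y)"
proof
  fix a assume a: "a \<in> filter_ext G x \<inter> filter_ext G y"
  obtain h n where h: "h \<in> G" and bounds: "mpow (m h x) n \<le> a" "mpow (m h y) n \<le> a"
    using filter_ext_common_witness[OF assms IntD1[OF a] IntD2[OF a]] .
  have "mpow (m h (sup x y)) (n + n + 1) \<le> sup (mpow (m h x) n) (mpow (m h y) n)"
    unfolding m_sup_distrib_left by (rule mpow_sup_le)
  also have "\<dots> \<le> a" using bounds by (rule le_supI)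
  finally have "mpow (m h (sup x y)) (n + n + 1) \<le> a" .
  with h show "a \<in> filter_ext G (sup x y)" unfolding filter_ext_def by blast
qed

lemma maximal_filter_avoiding_sup_prime:
  assumes G: "res_filter m G" and "a \<notin> G"
    and max: "\<And>H. res_filter m H \<Longrightarrow> G \<subseteq> H \<Longrightarrow> a \<notin> H \<Longrightarrow> H = G"
  shows "sup_prime G"
  unfolding sup_prime_def
proof (intro allI impI)
  fix x y assume xy: "sup x y \<in> G"
  have a_in_ext: "a \<in> filter_ext G z" if "z \<notin> G" for z
  proof (rule ccontr)
    assume "a \<notin> filter_ext G z"
    with res_filter_filter_ext[OF G] have "filter_ext G z = G" by (intro max)
    with res_filter_filter_ext(3)[OF G, of z] that show False by simp
  qed
  show "x \<in> G \<or> y \<in> G"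
  proof (rule ccontr)
    assume "\<not> (x \<in> G \<or> y \<in> G)"
    with a_in_ext have "a \<in> filter_ext G x \<inter> filter_ext G y" by simp
    with filter_ext_Int_subset[OF G] have "a \<in> filter_ext G (sup x y)" by (rule subsetD)
    with filter_ext_eq_self[OF G xy] \<open>a \<notin> G\<close> show False by simp
  qed
qed

lemma sup_prime_filter_separation:
  assumes "res_filter m F" and "a \<notin> F"
  obtains G where "res_filter m G" "sup_prime G" "F \<subseteq> G" "a \<notin> G"
proof (rule res_filter_maximal_avoiding[OF assms])
  fix G assume G: "res_filter m G" "F \<subseteq> G" "a \<notin> G"
    and max: "\<And>H. res_filter m H \<Longrightarrow> G \<subseteq> H \<Longrightarrow> a \<notin> H \<Longrightarrow> H = G"
  from G(1,3) max have "sup_prime G" by (rule maximal_filter_avoiding_sup_prime)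
  with G show thesis by (intro that)
qed

end

theorem corollary5p6:
  fixes m r l :: "'a::semilattice_sup \<Rightarrow> 'a \<Rightarrow> 'a" and F :: "'a set"
  assumes "residuated_sup_semilattice m r l"
    and "two_sided m"
    and "res_filter m F"
  shows "F = \<Inter> {G. res_filter m G \<and> sup_prime G \<and> F \<subseteq> G}"
proof -
  interpret two_sided_residuated_sup m r l
    using assms(1,2) by unfold_locales (simp_all add: residuated_sup_semilattice_def)
  have "a \<in> F" if a: "a \<in> \<Inter> {G. res_filter m G \<and> sup_prime G \<and> F \<subseteq> G}" for a
  proof (rule ccontr)
    assume "a \<notin> F"
    then obtain G where "res_filter m G" "sup_prime G" "F \<subseteq> G" "a \<notin> G"
      by (rule sup_prime_filter_separation[OF assms(3)])
    with a show False by blast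
  qed
  then show ?thesis by blast
qed

end
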